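(* For any history $\mathcal{F}_{t-1}$, conditioned on the event $E^{\widetilde f}(t)$, \[ \mathbb{P}\big(\mathbf{x}_t\in\mathcal{X}\setminus S_t\mid\mathcal{F}_{t-1}\big)\ge p-1/t^2,\qquad p=\frac{1}{4e\sqrt\pi}. \]
   Context: $\mathcal{X}$ finite subset of the unit ball of $\mathbb{R}^d$; $f\sim\mathcal{GP}(0,k)$, $k$ the exact NTK with $k\le K_0$, $|f|\le B'$; noise $\mathcal{N}(0,\sigma^2)$; $\delta\in(0,1)$, horizon $T$; $\mathbf{x}^*$ maximizes $f$, $\Delta(\mathbf{x})=f(\mathbf{x}^* )-f(\mathbf{x})$. $\widetilde k$ is the empirical NTK (gradient inner product of a network with $L+1$ layers at initialization) with $|\widetilde k-k|\le(L+1)\varepsilon$ on $\mathcal{X}\times\mathcal{X}$, $(L+1)\varepsilon\le1$, $\sigma^2\le1$, $\hat K_0=\max\{1,K_0\}$. $\beta_t=2\log(2\pi^2t^2|\mathcal{X}|/(3\delta))$, $c_t=\beta_t(1+\sqrt{2\log(|\mathcal{X}|t^2)})$. Queries indexed sequentially; $\mathrm{fb}[t]$ largest index observed when $\mathbf{x}_t$ is chosen ($t-\mathrm{fb}[t]\le B$); $\mathcal{F}_{t-1}$ the history. $\widetilde\mu_{\mathrm{fb}[t]},\widetilde\sigma_{\mathrm{fb}[t]}$: GP posterior mean/std with kernel $\widetilde k$ given observations $1,\dots,\mathrm{fb}[t]$; given $\mathcal{F}_{t-1}$, $\widetilde f_t\sim\mathcal{GP}(\widetilde\mu_{\mathrm{fb}[t]},\beta_t^2\widetilde\sigma^2_{\mathrm{fb}[t]})$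 and $\mathbf{x}_t=\arg\max_{\mathbf{x}}\widetilde f_t(\mathbf{x})$. $\epsilon_{m,t}=2\hat K_0\frac{t^2(L+1)\varepsilon}{\sigma^4}(B'+\sigma\sqrt{2\log(4T/\delta)})+\beta_t\sqrt{(L+1)\varepsilon(1+4\hat K_0^2t^2/\sigma^4)}$. $E^{\widetilde f}(t)$: $|\widetilde\mu_{\mathrm{fb}[t]}(\mathbf{x})-f(\mathbf{x})|\le\beta_t\widetilde\sigma_{\mathrm{fb}[t]}(\mathbf{x})+\epsilon_{m,t}$ for all $\mathbf{x}$. Saturated set: $S_t=\{\mathbf{x}\in\mathcal{X}:\Delta(\mathbf{x})>c_t\widetilde\sigma_{\mathrm{fb}[t]}(\mathbf{x})+2\epsilon_{m,t}\}$. *)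

theory Defs
  imports "HOL-Probability.Probability" "Jordan_Normal_Form.Gauss_Jordan_Elimination"
begin

definition gauss_law :: "real \<Rightarrow> real \<Rightarrow> real measure" where
  "gauss_law m v = (if v > 0 then density lborel (normal_density m (sqrt v)) else return borel m)"

definition gaussian_process_on ::
  "'w measure \<Rightarrow> 'a set \<Rightarrow> ('w \<Rightarrow> 'a \<Rightarrow> real) \<Rightarrow> ('a \<Rightarrow> real) \<Rightarrow> ('a \<Rightarrow> 'a \<Rightarrow> real) \<Rightarrow> bool" where
  "gaussian_process_on M X F m C \<longleftrightarrow>
     (\<forall>x\<in>X. (\<lambda>w. F w x) \<in> borel_measurable M) \<and>
     (\<forall>c :: 'a \<Rightarrow> real.
        distr M borel (\<lambda>w. \<Sum>x\<in>X. c x * F w x)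
          = gauss_law (\<Sum>x\<in>X. c x * m x) (\<Sum>x\<in>X. \<Sum>y\<in>X. c x * c y * C x y))"

text \<open>Observation i (1 \<le> i \<le> n) is the pair (xs i, ys i); matrix/vector index j corresponds
  to observation j+1.\<close>
definition gram :: "('a \<Rightarrow> 'a \<Rightarrow> real) \<Rightarrow> (nat \<Rightarrow> 'a) \<Rightarrow> nat \<Rightarrow> real mat" where
  "gram kt xs n = Matrix.mat n n (\<lambda>(i, j). kt (xs (Suc i)) (xs (Suc j)))"

definition kvec :: "('a \<Rightarrow> 'a \<Rightarrow> real) \<Rightarrow> (nat \<Rightarrow> 'a) \<Rightarrow> nat \<Rightarrow> 'a \<Rightarrow> real vec" where
  "kvec kt xs n x = Matrix.vec n (\<lambda>i. kt x (xs (Suc i)))"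

definition yvec :: "(nat \<Rightarrow> real) \<Rightarrow> nat \<Rightarrow> real vec" where
  "yvec ys n = Matrix.vec n (\<lambda>i. ys (Suc i))"

definition reg_inv :: "('a \<Rightarrow> 'a \<Rightarrow> real) \<Rightarrow> real \<Rightarrow> (nat \<Rightarrow> 'a) \<Rightarrow> nat \<Rightarrow> real mat" where
  "reg_inv kt s2 xs n = the (mat_inverse (gram kt xs n + s2 \<cdot>\<^sub>m 1\<^sub>m n))"

definition post_mean ::
  "('a \<Rightarrow> 'a \<Rightarrow> real) \<Rightarrow> real \<Rightarrow> (nat \<Rightarrow> 'a) \<Rightarrow> (nat \<Rightarrow> real) \<Rightarrow> nat \<Rightarrow> 'a \<Rightarrow> real" where
  "post_mean kt s2 xs ys n x = scalar_prod (kvec kt xs n x) (reg_inv kt s2 xs n *\<^sub>v yvec ys n)"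

definition post_cov ::
  "('a \<Rightarrow> 'a \<Rightarrow> real) \<Rightarrow> real \<Rightarrow> (nat \<Rightarrow> 'a) \<Rightarrow> nat \<Rightarrow> 'a \<Rightarrow> 'a \<Rightarrow> real" where
  "post_cov kt s2 xs n x y = kt x y - scalar_prod (kvec kt xs n x) (reg_inv kt s2 xs n *\<^sub>v kvec kt xs n y)"

definition post_sd :: "('a \<Rightarrow> 'a \<Rightarrow> real) \<Rightarrow> real \<Rightarrow> (nat \<Rightarrow> 'a) \<Rightarrow> nat \<Rightarrow> 'a \<Rightarrow> real" where
  "post_sd kt s2 xs n x = sqrt (post_cov kt s2 xs n x x)"

definition beta_t :: "nat \<Rightarrow> nat \<Rightarrow> real \<Rightarrow> real" where
  "beta_t t cardX \<delta> = 2 * ln (2 * pi^2 * real t^2 * real cardX / (3 * \<delta>))"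

definition c_t :: "nat \<Rightarrow> nat \<Rightarrow> real \<Rightarrow> real" where
  "c_t t cardX \<delta> = beta_t t cardX \<delta> * (1 + sqrt (2 * ln (real cardX * real t^2)))"

text \<open>epsilon_{m,t}; Lp1eps stands for (L+1)*epsilon.\<close>
definition eps_mt ::
  "nat \<Rightarrow> nat \<Rightarrow> real \<Rightarrow> real \<Rightarrow> real \<Rightarrow> real \<Rightarrow> real \<Rightarrow> nat \<Rightarrow> real" where
  "eps_mt t cardX \<delta> K0hat Lp1eps \<sigma> B' T =
     2 * K0hat * (real t^2 * Lp1eps / \<sigma>^4) * (B' + \<sigma> * sqrt (2 * ln (4 * real T / \<delta>)))
     + beta_t t cardX \<delta> * sqrt (Lp1eps * (1 + 4 * K0hat^2 * real t^2 / \<sigma>^4))"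

end

theory Submission
  imports Defs "Jordan_Normal_Form.Determinant"
begin

text \<open>With probability at least \<open>1/(4 e sqrt pi)\<close> the Thompson sample at \<open>x\<^sup>*\<close> exceeds
  the posterior mean there by \<open>\<beta>\<^sub>t\<close> posterior standard deviations (Gaussian anti-concentration);
  by a Gaussian tail bound and a union bound over \<open>\<X>\<close>, with probability at least \<open>1 - 1/t\<^sup>2\<close>
  no sample exceeds its mean by more than \<open>\<beta>\<^sub>t sqrt (2 log (|\<X>| t\<^sup>2))\<close> standard deviations.
  On the intersection of the two events the sample at its maximiser \<open>x\<^sub>t\<close> is squeezed between
  these thresholds, and the confidence bounds of \<open>E(t)\<close> at \<open>x\<^sup>*\<close> and at \<open>x\<^sub>t\<close> turn this into
  \<open>\<Delta>(x\<^sub>t) \<le> c\<^sub>t \<sigma>(x\<^sub>t) + 2 \<epsilon>\<^sub>m\<^sub>,\<^sub>t\<close>, i.e. \<open>x\<^sub>t\<close> is unsaturated.\<close>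

lemma normal_density_upper_tail_ge:
  fixes m s :: real
  assumes s: "0 < s"
  shows "1 / (4 * exp 1 * sqrt pi) \<le> measure (density lborel (normal_density m s)) {y. m + s \<le> y}"
proof -
  interpret prob_space "density lborel (normal_density m s)"
    using s by (rule prob_space_normal_density)
  define c where "c = exp (-2) / (s * sqrt (2 * pi))"
  have c_nonneg: "0 \<le> c" using s by (simp add: c_def)
  have density_ge: "ennreal c * indicator {m + s .. m + 2 * s} y
      \<le> ennreal (normal_density m s y) * indicator {y. m + s \<le> y} y" for y
  proof (cases "y \<in> {m + s .. m + 2 * s}")
    case True
    have "(y - m)^2 \<le> (2 * s)^2" using True s by (intro power_mono) auto
    then have "exp (-2) \<le> exp (- ((y - m)^2) / (2 * s^2))"
      using s by (simp add: field_simps power2_eq_square)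
    moreover have "sqrt (2 * pi * s^2) = s * sqrt (2 * pi)" using s by (simp add: real_sqrt_mult)
    ultimately have "c \<le> normal_density m s y"
      using s unfolding c_def normal_density_def by (simp add: divide_right_mono)
    then show ?thesis using True by (simp add: indicator_def)
  qed (simp add: indicator_def)
  have "ennreal (c * s) = (\<integral>\<^sup>+ y. ennreal c * indicator {m + s .. m + 2 * s} y \<partial>lborel)"
    using s c_nonneg by (simp add: nn_integral_cmult_indicator ennreal_mult)
  also have "\<dots> \<le> (\<integral>\<^sup>+ y. ennreal (normal_density m s y) * indicator {y. m + s \<le> y} y \<partial>lborel)"
    by (intro nn_integral_mono density_ge)
  also have "\<dots> = ennreal (measure (density lborel (normal_density m s)) {y. m + s \<le> y})"
    by (simp add: emeasure_density emeasure_eq_measure[symmetric])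
  finally have tail_ge: "c * s \<le> measure (density lborel (normal_density m s)) {y. m + s \<le> y}"
    by (simp add: ennreal_le_iff[symmetric] del: ennreal_le_iff)
  have "sqrt 2 < (1.415::real)" by (rule real_less_lsqrt) (auto simp: power2_eq_square)
  then have "exp 1 * sqrt 2 \<le> (2.72::real) * 1.415"
    using e_less_272 by (intro mult_mono) auto
  then have "exp 1 * exp 1 * sqrt 2 * sqrt pi \<le> 4 * exp 1 * sqrt pi"
    by (simp add: mult_right_mono)
  then have "1 / (4 * exp 1 * sqrt pi) \<le> 1 / (exp 1 * exp 1 * sqrt 2 * sqrt pi)"
    by (intro divide_left_mono) auto
  also have "\<dots> = c * s"
    using s by (simp add: c_def exp_minus mult_exp_exp inverse_eq_divide real_sqrt_mult)
  finally show ?thesis using tail_ge by linarith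
qed

lemma normal_density_upper_tail_le:
  fixes m s a :: real
  assumes s: "0 < s" and a: "0 \<le> a"
  shows "measure (density lborel (normal_density m s)) {y. m + a * s < y} \<le> exp (- (a^2) / 2)"
proof -
  interpret prob_space "density lborel (normal_density m s)"
    using s by (rule prob_space_normal_density)
  interpret shifted: prob_space "density lborel (normal_density (m + a * s) s)"
    using s by (rule prob_space_normal_density)
  have density_le: "ennreal (normal_density m s y) * indicator {y. m + a * s < y} y
      \<le> ennreal (exp (- (a^2) / 2)) * ennreal (normal_density (m + a * s) s y)" for y
  proof (cases "m + a * s < y")
    case True
    define z where "z = (y - m) / s"
    have "a \<le> z" using True s by (simp add: z_def field_simps)
    then have "- (z^2) / 2 \<le> - (a^2) / 2 + - ((z - a)^2) / 2"
      using a by (simp add: power2_eq_square field_simps mult_left_mono)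
    moreover have "- ((y - m)^2) / (2 * s^2) = - (z^2) / 2"
      and "- ((y - (m + a * s))^2) / (2 * s^2) = - ((z - a)^2) / 2"
      using s by (simp_all add: z_def power2_eq_square field_simps)
    ultimately have "exp (- ((y - m)^2) / (2 * s^2))
        \<le> exp (- (a^2) / 2) * exp (- ((y - (m + a * s))^2) / (2 * s^2))"
      by (simp only: mult_exp_exp) simp
    then have "normal_density m s y \<le> exp (- (a^2) / 2) * normal_density (m + a * s) s y"
      unfolding normal_density_def by (simp add: divide_right_mono)
    then show ?thesis using True by (simp add: ennreal_mult[symmetric])
  qed simp
  have "ennreal (measure (density lborel (normal_density m s)) {y. m + a * s < y})
      = (\<integral>\<^sup>+ y. ennreal (normal_density m s y) * indicator {y. m + a * s < y} y \<partial>lborel)"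
    by (simp add: emeasure_density emeasure_eq_measure[symmetric])
  also have "\<dots> \<le> (\<integral>\<^sup>+ y. ennreal (exp (- (a^2) / 2)) * ennreal (normal_density (m + a * s) s y) \<partial>lborel)"
    by (intro nn_integral_mono density_le)
  also have "\<dots> = ennreal (exp (- (a^2) / 2)) * (\<integral>\<^sup>+ y. ennreal (normal_density (m + a * s) s y) \<partial>lborel)"
    by (rule nn_integral_cmult) auto
  also have "(\<integral>\<^sup>+ y. ennreal (normal_density (m + a * s) s y) \<partial>lborel) = 1"
    using shifted.emeasure_space_1 by (simp add: emeasure_density)
  finally show ?thesis by (simp add: ennreal_le_iff[symmetric] del: ennreal_le_iff)
qed

lemma gauss_law_upper_tail_ge:
  assumes "0 \<le> v"
  shows "1 / (4 * exp 1 * sqrt pi) \<le> measure (gauss_law m v) {y. m + sqrt v \<le> y}"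
proof (cases "v = 0")
  case True
  have "1 * 1 \<le> exp 1 * sqrt pi"
    using pi_gt3 by (intro mult_mono) auto
  then have "1 \<le> 4 * exp 1 * sqrt pi" by simp
  then show ?thesis using True by (simp add: gauss_law_def measure_return)
next
  case False
  then show ?thesis
    using assms by (simp add: gauss_law_def normal_density_upper_tail_ge)
qed

lemma gauss_law_upper_tail_le:
  assumes "0 \<le> v" and "0 \<le> a"
  shows "measure (gauss_law m v) {y. m + a * sqrt v < y} \<le> exp (- (a^2) / 2)"
proof (cases "v = 0")
  case True
  then show ?thesis by (simp add: gauss_law_def measure_return)
next
  case False
  with assms have "0 < v" by simp
  with normal_density_upper_tail_le[of "sqrt v" a m] assms show ?thesis
    by (simp add: gauss_law_def)
qed

lemma gaussian_process_on_distr_coordinate: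
  assumes gp: "gaussian_process_on M X F m C" and X: "finite X" and x: "x \<in> X"
  shows "distr M borel (\<lambda>w. F w x) = gauss_law (m x) (C x x)"
proof -
  define c :: "_ \<Rightarrow> real" where "c y = (if y = x then 1 else 0)" for y
  have pick: "(\<Sum>y\<in>X. c y * h y) = h x" for h :: "_ \<Rightarrow> real"
  proof -
    have "(\<Sum>y\<in>X. c y * h y) = (\<Sum>y\<in>X. if y = x then h y else 0)"
      by (intro sum.cong) (simp_all add: c_def)
    then show ?thesis using X x by simp
  qed
  have pick_pair: "(\<Sum>y\<in>X. \<Sum>z\<in>X. c y * c z * C y z) = C x x"
    by (simp add: mult.assoc sum_distrib_left[symmetric] pick)
  have "distr M borel (\<lambda>w. \<Sum>y\<in>X. c y * F w y)
      = gauss_law (\<Sum>y\<in>X. c y * m y) (\<Sum>y\<in>X. \<Sum>z\<in>X. c y * c z * C y z)"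
    using gp unfolding gaussian_process_on_def by blast
  then show ?thesis
    by (simp only: pick pick_pair)
qed

lemma gaussian_process_on_prob_coordinate:
  assumes gp: "gaussian_process_on M X F m C" and "finite X" "x \<in> X" and B: "B \<in> sets borel"
  shows "measure M {w\<in>space M. F w x \<in> B} = measure (gauss_law (m x) (C x x)) B"
proof -
  have "(\<lambda>w. F w x) \<in> borel_measurable M"
    using gp \<open>x \<in> X\<close> unfolding gaussian_process_on_def by blast
  from measure_distr[OF this B] show ?thesis
    using gaussian_process_on_distr_coordinate[OF assms(1-3)]
    by (simp add: vimage_def Int_def conj_commute)
qed

text \<open>On the event \<open>lo \<le> F w xstar\<close> where no \<open>F w x\<close> exceeds \<open>hi x\<close>, the maximiser satisfies
  \<open>lo \<le> F w xstar \<le> F w (xt w) \<le> hi (xt w)\<close>.\<close>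
lemma prob_argmax_mem_ge:
  fixes F :: "'w \<Rightarrow> 'a \<Rightarrow> real"
  assumes "prob_space M" and X: "finite X" "xstar \<in> X"
    and F_meas: "\<And>x. x \<in> X \<Longrightarrow> (\<lambda>w. F w x) \<in> borel_measurable M"
    and xt_meas: "xt \<in> measurable M (count_space UNIV)"
    and argmax: "\<And>w. w \<in> space M \<Longrightarrow> xt w \<in> X \<and> (\<forall>y\<in>X. F w y \<le> F w (xt w))"
    and A: "\<And>x. x \<in> X \<Longrightarrow> lo \<le> hi x \<Longrightarrow> x \<in> A"
  shows "measure M {w\<in>space M. lo \<le> F w xstar} - (\<Sum>x\<in>X. measure M {w\<in>space M. hi x < F w x})
    \<le> measure M {w\<in>space M. xt w \<in> A}"
proof -
  interpret prob_space M by fact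
  define H where "H = {w\<in>space M. lo \<le> F w xstar}"
  define U where "U = (\<Union>x\<in>X. {w\<in>space M. hi x < F w x})"
  have exceed_events: "{w\<in>space M. hi x < F w x} \<in> events" if "x \<in> X" for x
    using F_meas[OF that] by measurable
  have H_event: "H \<in> events"
    unfolding H_def using F_meas[OF X(2)] by measurable
  have "{w\<in>space M. xt w \<in> A} = xt -` A \<inter> space M" by auto
  then have target_event: "{w\<in>space M. xt w \<in> A} \<in> events"
    using measurable_sets[OF xt_meas, of A] by simp
  have "H - U \<subseteq> {w\<in>space M. xt w \<in> A}"
  proof
    fix w assume "w \<in> H - U"
    then have w: "w \<in> space M" and lo: "lo \<le> F w xstar" and below: "\<forall>x\<in>X. F w x \<le> hi x"
      by (auto simp: H_def U_def not_less)
    have xt: "xt w \<in> X" "F w xstar \<le> F w (xt w)"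
      using argmax[OF w] X(2) by auto
    then have "lo \<le> hi (xt w)"
      using lo below[rule_format, OF xt(1)] by linarith
    with A[OF xt(1)] w show "w \<in> {w\<in>space M. xt w \<in> A}" by simp
  qed
  then have "measure M (H - U) \<le> measure M {w\<in>space M. xt w \<in> A}"
    using target_event by (rule finite_measure_mono)
  moreover have "measure M (H - U) = measure M H - measure M (H \<inter> U)"
    using H_event exceed_events X(1) by (intro finite_measure_Diff') (auto simp: U_def)
  moreover have "measure M (H \<inter> U) \<le> measure M U"
    using exceed_events X(1) by (intro finite_measure_mono) (auto simp: U_def)
  moreover have "measure M U \<le> (\<Sum>x\<in>X. measure M {w\<in>space M. hi x < F w x})"
    unfolding U_def using exceed_events X(1) by (intro finite_measure_subadditive_finite) auto
  ultimately show ?thesis unfolding H_def by linarith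
qed

lemma gaussian_process_on_argmax_prob_ge:
  assumes M: "prob_space M" and X: "finite X" "xstar \<in> X"
    and gp: "gaussian_process_on M X F m C" and C: "\<And>x. x \<in> X \<Longrightarrow> 0 \<le> C x x"
    and xt_meas: "xt \<in> measurable M (count_space UNIV)"
    and argmax: "\<And>w. w \<in> space M \<Longrightarrow> xt w \<in> X \<and> (\<forall>y\<in>X. F w y \<le> F w (xt w))"
    and a: "0 \<le> a"
    and A: "\<And>x. x \<in> X \<Longrightarrow> m xstar + sqrt (C xstar xstar) \<le> m x + a * sqrt (C x x) \<Longrightarrow> x \<in> A"
  shows "1 / (4 * exp 1 * sqrt pi) - card X * exp (- (a^2) / 2) \<le> measure M {w\<in>space M. xt w \<in> A}"
proof -
  have F_meas: "\<And>x. x \<in> X \<Longrightarrow> (\<lambda>w. F w x) \<in> borel_measurable M"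
    using gp unfolding gaussian_process_on_def by blast
  have peak: "1 / (4 * exp 1 * sqrt pi) \<le> measure M {w\<in>space M. m xstar + sqrt (C xstar xstar) \<le> F w xstar}"
    using gaussian_process_on_prob_coordinate[OF gp X, of "{y. m xstar + sqrt (C xstar xstar) \<le> y}"]
      gauss_law_upper_tail_ge[OF C[OF X(2)], of "m xstar"] by simp
  have tail: "measure M {w\<in>space M. m x + a * sqrt (C x x) < F w x} \<le> exp (- (a^2) / 2)"
    if "x \<in> X" for x
    using gaussian_process_on_prob_coordinate[OF gp X(1) that, of "{y. m x + a * sqrt (C x x) < y}"]
      gauss_law_upper_tail_le[OF C[OF that] a, of "m x"] by simp
  have "(\<Sum>x\<in>X. measure M {w\<in>space M. m x + a * sqrt (C x x) < F w x}) \<le> card X * exp (- (a^2) / 2)"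
    using sum_mono[of X _ "\<lambda>_. exp (- (a^2) / 2)", OF tail] by simp
  moreover have "measure M {w\<in>space M. m xstar + sqrt (C xstar xstar) \<le> F w xstar}
      - (\<Sum>x\<in>X. measure M {w\<in>space M. m x + a * sqrt (C x x) < F w x})
      \<le> measure M {w\<in>space M. xt w \<in> A}"
    using A by (intro prob_argmax_mem_ge[OF M X F_meas xt_meas argmax]) auto
  ultimately show ?thesis using peak by linarith
qed

lemma gram_quadratic_form:
  fixes g :: "'a \<Rightarrow> 'b::real_inner"
  assumes kt: "\<forall>x y. kt x y = inner (g x) (g y)" and v: "v \<in> carrier_vec n"
  shows "v \<bullet> (gram kt xs n *\<^sub>v v)
    = inner (\<Sum>i<n. v $ i *\<^sub>R g (xs (Suc i))) (\<Sum>i<n. v $ i *\<^sub>R g (xs (Suc i)))"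
proof -
  have "v \<bullet> (gram kt xs n *\<^sub>v v) = (\<Sum>i<n. v $ i * (\<Sum>j<n. kt (xs (Suc i)) (xs (Suc j)) * v $ j))"
    using v unfolding gram_def scalar_prod_def
    by (intro sum.cong) (auto simp: lessThan_atLeast0 scalar_prod_def)
  then show ?thesis
    unfolding inner_sum_left by (simp add: inner_sum_right kt sum_distrib_left mult_ac)
qed

lemma reg_gram_quadratic_form:
  assumes v: "v \<in> carrier_vec n"
  shows "v \<bullet> ((gram kt xs n + s2 \<cdot>\<^sub>m 1\<^sub>m n) *\<^sub>v v) = v \<bullet> (gram kt xs n *\<^sub>v v) + s2 * (v \<bullet> v)"
proof -
  have G: "gram kt xs n \<in> carrier_mat n n" by (simp add: gram_def)
  then have "(gram kt xs n + s2 \<cdot>\<^sub>m 1\<^sub>m n) *\<^sub>v v = gram kt xs n *\<^sub>v v + s2 \<cdot>\<^sub>v (1\<^sub>m n *\<^sub>v v)"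
    using v by (auto simp: add_mult_distrib_mat_vec[of _ n n])
  then show ?thesis
    using v G by (simp add: scalar_prod_add_distrib[of _ n])
qed

text \<open>A Gram matrix of feature vectors is positive semidefinite, so adding \<open>s2 > 0\<close> times the
  identity makes it positive definite, hence invertible.\<close>
lemma reg_inv_right_inverse:
  fixes g :: "'a \<Rightarrow> 'b::real_inner"
  assumes kt: "\<forall>x y. kt x y = inner (g x) (g y)" and s2: "0 < s2"
  shows "(gram kt xs n + s2 \<cdot>\<^sub>m 1\<^sub>m n) * reg_inv kt s2 xs n = 1\<^sub>m n"
    and "reg_inv kt s2 xs n \<in> carrier_mat n n"
proof -
  let ?A = "gram kt xs n + s2 \<cdot>\<^sub>m 1\<^sub>m n"
  have A: "?A \<in> carrier_mat n n" by (simp add: gram_def)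
  have "det ?A \<noteq> 0"
  proof
    assume "det ?A = 0"
    then obtain v where v: "v \<in> carrier_vec n" "v \<noteq> 0\<^sub>v n" "?A *\<^sub>v v = 0\<^sub>v n"
      using det_0_iff_vec_prod_zero_field[OF A] by auto
    have "0 < v \<bullet> v"
      using conjugate_square_greater_0_vec[OF v(1)] v(2) by simp
    then have "0 < s2 * (v \<bullet> v)" using s2 by simp
    moreover have "0 \<le> v \<bullet> (gram kt xs n *\<^sub>v v)" using gram_quadratic_form[OF kt v(1)] by simp
    moreover have "v \<bullet> (?A *\<^sub>v v) = 0" using v by simp
    ultimately show False
      using reg_gram_quadratic_form[OF v(1), of kt xs s2] by linarith
  qed
  then have "?A \<in> Units (ring_mat TYPE(real) n ())" by (rule det_non_zero_imp_unit[OF A])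
  then obtain R where "mat_inverse ?A = Some R"
    using mat_inverse(1)[OF A, where b = "()"] by (cases "mat_inverse ?A") auto
  with mat_inverse(2)[OF A this] show "?A * reg_inv kt s2 xs n = 1\<^sub>m n"
    and "reg_inv kt s2 xs n \<in> carrier_mat n n"
    by (simp_all add: reg_inv_def)
qed

text \<open>With \<open>w = (K + s2 I)\<^sup>-\<^sup>1 k(x)\<close> and \<open>u = \<Sum>\<^sub>i w\<^sub>i g(x\<^sub>i)\<close> the posterior variance equals
  \<open>\<parallel>g(x) - u\<parallel>\<^sup>2 + s2 \<parallel>w\<parallel>\<^sup>2\<close>.\<close>
lemma post_cov_nonneg:
  fixes g :: "'a \<Rightarrow> 'b::real_inner"
  assumes kt: "\<forall>x y. kt x y = inner (g x) (g y)" and s2: "0 < s2"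
  shows "0 \<le> post_cov kt s2 xs n x x"
proof -
  define kx where "kx = kvec kt xs n x"
  define w where "w = reg_inv kt s2 xs n *\<^sub>v kx"
  define u where "u = (\<Sum>i<n. w $ i *\<^sub>R g (xs (Suc i)))"
  have kx: "kx \<in> carrier_vec n" by (simp add: kx_def kvec_def)
  have w: "w \<in> carrier_vec n"
    using reg_inv_right_inverse(2)[OF kt s2, of xs n] kx by (simp add: w_def mult_mat_vec_carrier)
  have "(gram kt xs n + s2 \<cdot>\<^sub>m 1\<^sub>m n) *\<^sub>v w = kx"
    using reg_inv_right_inverse[OF kt s2, of xs n] kx unfolding w_def
    by (simp add: gram_def assoc_mult_mat_vec[symmetric, of _ n n _ n])
  then have "w \<bullet> kx = w \<bullet> (gram kt xs n *\<^sub>v w) + s2 * (w \<bullet> w)"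
    using reg_gram_quadratic_form[OF w, of kt xs s2] by simp
  then have kx_w: "kx \<bullet> w = inner u u + s2 * (w \<bullet> w)"
    by (simp only: comm_scalar_prod[OF w kx] gram_quadratic_form[OF kt w] u_def[symmetric])
  have "kx \<bullet> w = inner (g x) u"
    using w unfolding u_def kx_def kvec_def scalar_prod_def
    by (auto simp: inner_sum_right kt lessThan_atLeast0 mult.commute intro!: sum.cong)
  moreover have "post_cov kt s2 xs n x x = inner (g x) (g x) - kx \<bullet> w"
    using kt by (simp add: post_cov_def kx_def w_def)
  moreover have "inner (g x - u) (g x - u) = inner (g x) (g x) - 2 * inner (g x) u + inner u u"
    by (simp add: inner_diff_left inner_diff_right inner_commute)
  ultimately have "post_cov kt s2 xs n x x = inner (g x - u) (g x - u) + s2 * (w \<bullet> w)"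
    using kx_w by linarith
  moreover have "0 \<le> w \<bullet> w"
    using conjugate_square_ge_0_vec[of w] by simp
  ultimately show ?thesis
    using s2 by simp
qed

lemma beta_t_pos:
  assumes "1 \<le> t" "1 \<le> N" "0 < \<delta>" "\<delta> \<le> 1"
  shows "0 < beta_t t N \<delta>"
proof -
  have "3 * 3 < pi * pi" using pi_gt3 by (intro mult_strict_mono) auto
  then have three_lt: "3 < 2 * pi^2" by (simp add: power2_eq_square)
  have "1 \<le> t^2 * N" using assms(1,2) by (simp add: Suc_le_eq)
  then have "1 \<le> real t^2 * real N" by (metis of_nat_1 of_nat_le_iff of_nat_mult of_nat_power)
  then have "2 * pi^2 \<le> 2 * pi^2 * real t^2 * real N"
    using mult_left_mono[of 1 "real t^2 * real N" "2 * pi^2"] by (simp add: mult.assoc)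
  then have "3 * \<delta> < 2 * pi^2 * real t^2 * real N"
    using three_lt assms(4) by linarith
  then have "1 < 2 * pi^2 * real t^2 * real N / (3 * \<delta>)"
    using assms(3) by (subst less_divide_eq_1_pos) auto
  then show ?thesis by (simp add: beta_t_def ln_gt_zero)
qed

theorem lemma15:
  fixes X :: "(real^'d) set"
    and k kt :: "real^'d \<Rightarrow> real^'d \<Rightarrow> real"
    and g :: "real^'d \<Rightarrow> real^'p"
    and f :: "real^'d \<Rightarrow> real"
    and xstar :: "real^'d"
    and K0 B' \<sigma> \<delta> \<epsilon> :: real
    and L T t n B :: nat
    and xs :: "nat \<Rightarrow> real^'d" and ys :: "nat \<Rightarrow> real"
    and M :: "'w measure"
    and Ft :: "'w \<Rightarrow> real^'d \<Rightarrow> real"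
    and xt :: "'w \<Rightarrow> real^'d"
  assumes X_fin: "finite X" and X_ball: "X \<subseteq> cball 0 1"
    and k_bound: "\<forall>x\<in>X. \<forall>y\<in>X. k x y \<le> K0"
    and f_bound: "\<forall>x\<in>X. \<bar>f x\<bar> \<le> B'"
    and \<sigma>_pos: "0 < \<sigma>" and \<sigma>_le: "\<sigma>^2 \<le> 1"
    and \<delta>: "0 < \<delta>" "\<delta> < 1"
    and t: "1 \<le> t" "t \<le> T"
    and xstar: "xstar \<in> X" "\<forall>x\<in>X. f x \<le> f xstar"
    and kt_ntk: "\<forall>x y. kt x y = inner (g x) (g y)"
    and \<epsilon>: "0 \<le> \<epsilon>" "(real L + 1) * \<epsilon> \<le> 1"
    and kt_approx: "\<forall>x\<in>X. \<forall>y\<in>X. \<bar>kt x y - k x y\<bar> \<le> (real L + 1) * \<epsilon>"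
    and fb: "n < t" "t - n \<le> B"
    and hist: "\<forall>i\<in>{1..n}. xs i \<in> X"
    and E: "\<forall>x\<in>X. \<bar>post_mean kt (\<sigma>^2) xs ys n x - f x\<bar>
              \<le> beta_t t (card X) \<delta> * post_sd kt (\<sigma>^2) xs n x
                 + eps_mt t (card X) \<delta> (max 1 K0) ((real L + 1) * \<epsilon>) \<sigma> B' T"
    and M: "prob_space M"
    and TS: "gaussian_process_on M X Ft (post_mean kt (\<sigma>^2) xs ys n)
               (\<lambda>x y. (beta_t t (card X) \<delta>)^2 * post_cov kt (\<sigma>^2) xs n x y)"
    and xt_rv: "xt \<in> measurable M (count_space UNIV)"
    and xt_argmax: "\<forall>w\<in>space M. xt w \<in> X \<and> (\<forall>y\<in>X. Ft w y \<le> Ft w (xt w))"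
  shows "measure M {w\<in>space M. xt w \<in> X -
           {x\<in>X. f xstar - f x > c_t t (card X) \<delta> * post_sd kt (\<sigma>^2) xs n x
                   + 2 * eps_mt t (card X) \<delta> (max 1 K0) ((real L + 1) * \<epsilon>) \<sigma> B' T}}
         \<ge> 1 / (4 * exp 1 * sqrt pi) - 1 / real t^2"
proof -
  define \<mu> where "\<mu> = post_mean kt (\<sigma>^2) xs ys n"
  define sd where "sd = post_sd kt (\<sigma>^2) xs n"
  define \<beta> where "\<beta> = beta_t t (card X) \<delta>"
  define \<epsilon>m where "\<epsilon>m = eps_mt t (card X) \<delta> (max 1 K0) ((real L + 1) * \<epsilon>) \<sigma> B' T"
  define a where "a = sqrt (2 * ln (real (card X) * real t^2))"
  have "1 \<le> card X" using X_fin xstar(1) by (simp add: Suc_le_eq card_gt_0_iff) blast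
  then have "1 \<le> card X * t^2" using t(1) by (simp add: Suc_le_eq)
  then have "1 \<le> real (card X) * real t^2" by (metis of_nat_1 of_nat_le_iff of_nat_mult of_nat_power)
  then have a: "0 \<le> a" "card X * exp (- (a^2) / 2) = 1 / real t^2"
    using \<open>1 \<le> card X\<close> by (simp_all add: a_def exp_minus inverse_eq_divide)
  have \<beta>: "0 < \<beta>" unfolding \<beta>_def using \<open>1 \<le> card X\<close> t(1) \<delta> by (intro beta_t_pos) auto
  have var: "0 \<le> \<beta>^2 * post_cov kt (\<sigma>^2) xs n x x"
    "sqrt (\<beta>^2 * post_cov kt (\<sigma>^2) xs n x x) = \<beta> * sd x" for x
    using post_cov_nonneg[OF kt_ntk, of "\<sigma>^2" xs n x] \<sigma>_pos \<beta>
    by (simp_all add: sd_def post_sd_def real_sqrt_mult)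
  have unsaturated: "x \<in> X - {x\<in>X. f xstar - f x > c_t t (card X) \<delta> * sd x + 2 * \<epsilon>m}"
    if "x \<in> X" "\<mu> xstar + \<beta> * sd xstar \<le> \<mu> x + a * (\<beta> * sd x)" for x
  proof -
    have "c_t t (card X) \<delta> * sd x = \<beta> * sd x + a * (\<beta> * sd x)"
      by (simp add: c_t_def \<beta>_def a_def algebra_simps)
    moreover have "\<bar>\<mu> x - f x\<bar> \<le> \<beta> * sd x + \<epsilon>m" "\<bar>\<mu> xstar - f xstar\<bar> \<le> \<beta> * sd xstar + \<epsilon>m"
      using E[folded \<mu>_def \<beta>_def sd_def \<epsilon>m_def] that(1) xstar(1) by blast+
    ultimately have "f xstar - f x \<le> c_t t (card X) \<delta> * sd x + 2 * \<epsilon>m"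
      using that(2) by (simp add: abs_le_iff)
    then show ?thesis using that(1) by simp
  qed
  have "1 / (4 * exp 1 * sqrt pi) - card X * exp (- (a^2) / 2)
      \<le> measure M {w\<in>space M. xt w \<in> X - {x\<in>X. f xstar - f x > c_t t (card X) \<delta> * sd x + 2 * \<epsilon>m}}"
    using TS[folded \<mu>_def \<beta>_def] var xt_argmax unsaturated
    by (intro gaussian_process_on_argmax_prob_ge[OF M X_fin xstar(1) _ _ xt_rv _ a(1)]) auto
  then show ?thesis
    unfolding a(2) sd_def \<epsilon>m_def .
qed

end
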